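(* If $\Gamma$ is a simple, undirected, connected graph of order $p\ge 3$, then $\gamma_{[3R]}(\Gamma)\le \frac{7p}{4}$.
   Context: For a graph $\Gamma=(V,E)$ and $h:V\to\{0,1,2,3,4\}$, let $AN(v)=\{w\in N(v):h(w)\ge 1\}$, $AN[v]=AN(v)\cup\{v\}$ and $h(S)=\sum_{u\in S}h(u)$. $h$ is a triple Roman dominating function (3RDF) if every $v$ with $h(v)<3$ satisfies $h(AN[v])\ge|AN(v)|+3$. The triple Roman domination number $\gamma_{[3R]}(\Gamma)$ is the minimum weight $h(V)$ of a 3RDF of $\Gamma$. *)

theory Defs
  imports Complex_Main
begin

definition simple_graph :: "'a set \<Rightarrow> ('a \<Rightarrow> 'a \<Rightarrow> bool) \<Rightarrow> bool" where
  "simple_graph V E \<longleftrightarrow> finite V \<and> (\<forall>u v. E u v \<longrightarrow> u \<in> V \<and> v \<in> V)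
     \<and> (\<forall>u v. E u v \<longrightarrow> E v u) \<and> (\<forall>v. \<not> E v v)"

definition connected_graph :: "'a set \<Rightarrow> ('a \<Rightarrow> 'a \<Rightarrow> bool) \<Rightarrow> bool" where
  "connected_graph V E \<longleftrightarrow> (\<forall>u\<in>V. \<forall>v\<in>V. E\<^sup>*\<^sup>* u v)"

definition nbhd :: "'a set \<Rightarrow> ('a \<Rightarrow> 'a \<Rightarrow> bool) \<Rightarrow> 'a \<Rightarrow> 'a set" where
  "nbhd V E v = {w \<in> V. E v w}"

definition active_nbhd :: "'a set \<Rightarrow> ('a \<Rightarrow> 'a \<Rightarrow> bool) \<Rightarrow> ('a \<Rightarrow> nat) \<Rightarrow> 'a \<Rightarrow> 'a set" where
  "active_nbhd V E h v = {w \<in> nbhd V E v. h w \<ge> 1}"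

definition is_3RDF :: "'a set \<Rightarrow> ('a \<Rightarrow> 'a \<Rightarrow> bool) \<Rightarrow> ('a \<Rightarrow> nat) \<Rightarrow> bool" where
  "is_3RDF V E h \<longleftrightarrow> (\<forall>v\<in>V. h v \<le> 4) \<and>
     (\<forall>v\<in>V. h v < 3 \<longrightarrow>
        sum h (insert v (active_nbhd V E h v)) \<ge> card (active_nbhd V E h v) + 3)"

definition weight :: "'a set \<Rightarrow> ('a \<Rightarrow> nat) \<Rightarrow> nat" where
  "weight V h = sum h V"

text \<open>Functions are compared only through their values on V.\<close>
definition triple_roman_domination_number :: "'a set \<Rightarrow> ('a \<Rightarrow> 'a \<Rightarrow> bool) \<Rightarrow> nat" where
  "triple_roman_domination_number V E = Min {weight V h | h. is_3RDF V E h}"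

end

theory Submission
  imports Defs
begin

text \<open>Fix a root and keep only the edges joining consecutive distance levels: this gives a
  connected bipartite spanning subgraph H, and as p \<ge> 3 no two leaves of H are adjacent. Call a
  leaf strong if its neighbour (its support) is adjacent to at least two leaves. For each colour
  class s of H let h_s be 0 on strong leaves, 4 on their supports, 3 on the remaining vertices of
  colour s, 1 on the remaining leaves of the other colour and 0 elsewhere. Every vertex with
  h_s < 3 has only H-neighbours of weight at least 3, which makes h_s a triple Roman dominating
  function. The sum h_0 + h_1 is 8 on strong supports, 4 on the other leaves and 3 on the other
  non-leaves; every strong support owns two strong leaves of weight 0, and the supports of the
  other leaves are distinct non-leaves that are not strong supports, so the total is at most
  7p/2.\<close>

lemma trd_condition_from_subset:
  assumes fin: "finite V" and irr: "\<not> E v v"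
    and W: "W \<subseteq> active_nbhd V E h v" and ineq: "card W + 3 \<le> h v + sum h W"
  shows "card (active_nbhd V E h v) + 3 \<le> sum h (insert v (active_nbhd V E h v))"
proof -
  let ?A = "active_nbhd V E h v"
  have finA: "finite ?A" using fin unfolding active_nbhd_def nbhd_def by auto
  have "v \<notin> ?A" using irr unfolding active_nbhd_def nbhd_def by auto
  then have insert: "sum h (insert v ?A) = h v + sum h ?A" using finA by simp
  have split_sum: "sum h ?A = sum h W + sum h (?A - W)"
    using finA W by (metis add.commute sum.subset_diff)
  have split_card: "card ?A = card W + card (?A - W)"
    using finA W by (metis card_Diff_subset card_mono finite_subset le_add_diff_inverse)
  have "card (?A - W) = (\<Sum>_\<in>?A - W. 1)" by simp
  also have "\<dots> \<le> sum h (?A - W)"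
    by (rule sum_mono) (auto simp: active_nbhd_def)
  finally show ?thesis using insert split_sum split_card ineq by linarith
qed

lemma triple_roman_domination_number_le_weight:
  assumes "finite V" and "is_3RDF V E h"
  shows "triple_roman_domination_number V E \<le> weight V h"
proof -
  have "{weight V h | h. is_3RDF V E h} \<subseteq> {..4 * card V}"
  proof
    fix x assume "x \<in> {weight V h | h. is_3RDF V E h}"
    then obtain g where x: "x = weight V g" and g: "is_3RDF V E g" by auto
    have "sum g V \<le> (\<Sum>_\<in>V. 4)" using g by (intro sum_mono) (auto simp: is_3RDF_def)
    then show "x \<in> {..4 * card V}" by (simp add: x weight_def mult.commute)
  qed
  then show ?thesis
    unfolding triple_roman_domination_number_def
    using assms(2) by (intro Min_le) (auto intro: finite_subset)
qed

lemma connected_graph_nbhd_nonempty: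
  assumes "simple_graph V E" and "connected_graph V E" and "2 \<le> card V" and "v \<in> V"
  shows "nbhd V E v \<noteq> {}"
proof -
  have "\<not> V \<subseteq> {v}" using assms(3) card_mono[of "{v}" V] by auto
  then obtain u where "u \<in> V" "u \<noteq> v" by auto
  then have "E\<^sup>*\<^sup>* v u" using assms(2,4) by (simp add: connected_graph_def)
  then obtain w where "E v w" using \<open>u \<noteq> v\<close> by (auto elim: converse_rtranclpE)
  then show ?thesis using assms(1) by (auto simp: nbhd_def simple_graph_def)
qed

lemma connected_adjacent_leaves_card_le_2:
  assumes simple: "simple_graph V E" and connected: "connected_graph V E" and "E a b"
    and "card (nbhd V E a) = 1" and "card (nbhd V E b) = 1"
  shows "card V \<le> 2"
proof -
  have "a \<in> V" "b \<in> V" "E b a" using simple \<open>E a b\<close> by (auto simp: simple_graph_def)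
  then have "b \<in> nbhd V E a" "a \<in> nbhd V E b" using \<open>E a b\<close> by (auto simp: nbhd_def)
  then have nbhds: "nbhd V E a = {b}" "nbhd V E b = {a}"
    using assms(4,5) by (metis card_1_singletonE singletonD)+
  have closed: "z \<in> {a, b}" if "E\<^sup>*\<^sup>* a z" for z
    using that
  proof induction
    case (step x y)
    then have "y \<in> nbhd V E x" using simple by (auto simp: nbhd_def simple_graph_def)
    then show ?case using step.IH nbhds by auto
  qed simp
  have "V \<subseteq> {a, b}"
    using closed connected \<open>a \<in> V\<close> by (auto simp: connected_graph_def)
  moreover have "card {a, b} \<le> 2" by (simp add: card_insert_if)
  ultimately show ?thesis using card_mono[of "{a, b}" V] by simp
qed

definition hop_dist :: "('a \<Rightarrow> 'a \<Rightarrow> bool) \<Rightarrow> 'a \<Rightarrow> 'a \<Rightarrow> nat" where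
  "hop_dist R r v = (LEAST n. (R ^^ n) r v)"

lemma hop_dist_le: "(R ^^ n) r v \<Longrightarrow> hop_dist R r v \<le> n"
  unfolding hop_dist_def by (rule Least_le)

lemma hop_dist_self [simp]: "hop_dist R r r = 0"
  using hop_dist_le[where n=0 and R=R and r=r and v=r] by simp

lemma relpowp_hop_dist: "R\<^sup>*\<^sup>* r v \<Longrightarrow> (R ^^ hop_dist R r v) r v"
  unfolding hop_dist_def by (metis LeastI rtranclp_imp_relpowp)

lemma hop_dist_predecessor:
  assumes "R\<^sup>*\<^sup>* r v" and "v \<noteq> r"
  obtains w where "R w v" and "R\<^sup>*\<^sup>* r w" and "hop_dist R r v = Suc (hop_dist R r w)"
proof -
  have path: "(R ^^ hop_dist R r v) r v" using assms(1) by (rule relpowp_hop_dist)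
  then obtain m where m: "hop_dist R r v = Suc m"
    using assms(2) by (cases "hop_dist R r v") auto
  with path obtain w where w: "(R ^^ m) r w" "R w v" by (auto elim: relpowp_Suc_E)
  have "hop_dist R r w \<le> m" using w(1) by (rule hop_dist_le)
  moreover have "hop_dist R r v \<le> Suc (hop_dist R r w)"
    using relpowp_Suc_I[OF relpowp_hop_dist[OF relpowp_imp_rtranclp[OF w(1)]] w(2)]
    by (rule hop_dist_le)
  ultimately have "hop_dist R r v = Suc (hop_dist R r w)" using m by linarith
  then show ?thesis using that w relpowp_imp_rtranclp by metis
qed

definition level_graph :: "('a \<Rightarrow> 'a \<Rightarrow> bool) \<Rightarrow> 'a \<Rightarrow> 'a \<Rightarrow> 'a \<Rightarrow> bool" where
  "level_graph E r u v \<longleftrightarrow> E u v \<and>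
     (hop_dist E r v = Suc (hop_dist E r u) \<or> hop_dist E r u = Suc (hop_dist E r v))"

lemma simple_graph_level_graph: "simple_graph V E \<Longrightarrow> simple_graph V (level_graph E r)"
  by (auto simp: simple_graph_def level_graph_def)

lemma connected_graph_level_graph:
  assumes simple: "simple_graph V E" and connected: "connected_graph V E" and "r \<in> V"
  shows "connected_graph V (level_graph E r)"
proof -
  let ?L = "level_graph E r"
  have from_root: "?L\<^sup>*\<^sup>* r v" if "v \<in> V" for v
    using that
  proof (induction "hop_dist E r v" arbitrary: v)
    case 0
    then have "(E ^^ 0) r v"
      using relpowp_hop_dist[of E r v] connected \<open>r \<in> V\<close> by (simp add: connected_graph_def)
    then show ?case by simp
  next
    case (Suc n)
    have "E\<^sup>*\<^sup>* r v" using connected \<open>r \<in> V\<close> Suc.prems by (simp add: connected_graph_def)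
    moreover have "v \<noteq> r" using Suc.hyps(2) by auto
    ultimately obtain w where w: "E w v" "hop_dist E r v = Suc (hop_dist E r w)"
      by (rule hop_dist_predecessor)
    have "w \<in> V" using w(1) simple by (simp add: simple_graph_def)
    then have "?L\<^sup>*\<^sup>* r w" using Suc.hyps w(2) by simp
    moreover have "?L w v" using w by (simp add: level_graph_def)
    ultimately show ?case by simp
  qed
  have "symp ?L" using simple by (auto simp: symp_def simple_graph_def level_graph_def)
  then have "?L\<^sup>*\<^sup>* u v" if "u \<in> V" "v \<in> V" for u v
    using from_root[OF that(1)] from_root[OF that(2)]
    by (meson rtranclp_trans sympD symp_rtranclp)
  then show ?thesis by (simp add: connected_graph_def)
qed

locale connected_bipartite_spanning_subgraph =
  fixes V :: "'a set" and E F :: "'a \<Rightarrow> 'a \<Rightarrow> bool" and colour :: "'a \<Rightarrow> bool"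
  assumes simple_E: "simple_graph V E"
    and simple_F: "simple_graph V F"
    and connected_F: "connected_graph V F"
    and F_le_E: "F u v \<Longrightarrow> E u v"
    and F_bipartite: "F u v \<Longrightarrow> colour u \<noteq> colour v"
    and three_le_card: "3 \<le> card V"
begin

abbreviation N :: "'a \<Rightarrow> 'a set" where
  "N \<equiv> nbhd V F"

definition leaf :: "'a \<Rightarrow> bool" where
  "leaf v \<longleftrightarrow> card (N v) = 1"

definition support :: "'a \<Rightarrow> 'a" where
  "support v = the_elem (N v)"

definition leaf_nbrs :: "'a \<Rightarrow> 'a set" where
  "leaf_nbrs u = {w \<in> N u. leaf w}"

definition strong_support :: "'a \<Rightarrow> bool" where
  "strong_support u \<longleftrightarrow> 2 \<le> card (leaf_nbrs u)"

definition strong_leaf :: "'a \<Rightarrow> bool" where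
  "strong_leaf v \<longleftrightarrow> leaf v \<and> strong_support (support v)"

definition trdf :: "bool \<Rightarrow> 'a \<Rightarrow> nat" where
  "trdf s v = (if strong_leaf v then 0 else if strong_support v then 4
     else if colour v = s then 3 else if leaf v then 1 else 0)"

lemma finite_V: "finite V"
  using simple_F by (simp add: simple_graph_def)

lemma finite_N: "finite (N v)"
  using finite_V by (simp add: nbhd_def)

lemma N_subset: "N v \<subseteq> V"
  by (auto simp: nbhd_def)

lemma N_sym: "w \<in> N v \<Longrightarrow> v \<in> N w"
  using simple_F by (auto simp: nbhd_def simple_graph_def)

lemma N_nonempty: "v \<in> V \<Longrightarrow> N v \<noteq> {}"
  using connected_graph_nbhd_nonempty[OF simple_F connected_F] three_le_card by simp

lemma leaf_N: "leaf v \<Longrightarrow> N v = {support v}"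
  unfolding leaf_def support_def by (metis card_1_singletonE the_elem_eq)

lemma leaf_support_unique: "leaf w \<Longrightarrow> u \<in> N w \<Longrightarrow> support w = u"
  using leaf_N by auto

lemma support_in_N: "leaf v \<Longrightarrow> support v \<in> N v"
  using leaf_N by auto

lemma support_leaf_nbr: "w \<in> leaf_nbrs u \<Longrightarrow> support w = u"
  using N_sym leaf_support_unique by (simp add: leaf_nbrs_def)

lemma support_not_leaf: "leaf v \<Longrightarrow> \<not> leaf (support v)"
  using connected_adjacent_leaves_card_le_2[OF simple_F connected_F] three_le_card leaf_N
  unfolding leaf_def nbhd_def by force

lemma strong_support_not_leaf:
  assumes "strong_support u"
  shows "\<not> leaf u"
proof -
  have "card (leaf_nbrs u) \<le> card (N u)"
    using finite_N by (intro card_mono) (auto simp: leaf_nbrs_def)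
  then show ?thesis using assms by (simp add: strong_support_def leaf_def)
qed

lemma trdf_nbr_ge_3:
  assumes "trdf s v < 3" and "w \<in> N v"
  shows "3 \<le> trdf s w"
proof (cases "strong_leaf v")
  case True
  then have "w = support v" using assms(2) leaf_N by (auto simp: strong_leaf_def)
  then show ?thesis
    using True strong_support_not_leaf by (simp add: trdf_def strong_leaf_def)
next
  case False
  then have "\<not> strong_support v" and "colour v \<noteq> s"
    using assms(1) by (auto simp: trdf_def split: if_splits)
  moreover have "colour w = s"
    using \<open>colour v \<noteq> s\<close> F_bipartite assms(2) by (auto simp: nbhd_def)
  moreover have "\<not> strong_leaf w"
    using \<open>\<not> strong_support v\<close> N_sym[OF assms(2)] leaf_support_unique
    by (auto simp: strong_leaf_def)
  ultimately show ?thesis by (simp add: trdf_def)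
qed

lemma is_3RDF_trdf: "is_3RDF V E (trdf s)"
  unfolding is_3RDF_def
proof (intro conjI ballI impI)
  fix v assume "v \<in> V" show "trdf s v \<le> 4" by (simp add: trdf_def)
next
  fix v assume "v \<in> V" and small: "trdf s v < 3"
  have big_nbrs: "3 * card (N v) \<le> sum (trdf s) (N v)"
    using trdf_nbr_ge_3[OF small] sum_mono[of "N v" "\<lambda>_. 3" "trdf s"] by simp
  have "card (N v) + 3 \<le> trdf s v + sum (trdf s) (N v)"
  proof (cases "leaf v")
    case True
    show ?thesis
    proof (cases "strong_leaf v")
      case True
      then have "trdf s (support v) = 4"
        using strong_support_not_leaf by (simp add: trdf_def strong_leaf_def)
      then show ?thesis using \<open>leaf v\<close> leaf_N by simp
    next
      case False
      then have "trdf s v = 1" using small \<open>leaf v\<close> by (auto simp: trdf_def split: if_splits)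
      then show ?thesis using big_nbrs \<open>leaf v\<close> by (simp add: leaf_def)
    qed
  next
    case False
    moreover have "card (N v) \<noteq> 0" using N_nonempty[OF \<open>v \<in> V\<close>] finite_N by simp
    ultimately have "2 \<le> card (N v)" by (simp add: leaf_def)
    then show ?thesis using big_nbrs by linarith
  qed
  moreover have "N v \<subseteq> active_nbhd V E (trdf s) v"
    using trdf_nbr_ge_3[OF small] F_le_E by (force simp: active_nbhd_def nbhd_def)
  moreover have "\<not> E v v" using simple_E by (simp add: simple_graph_def)
  ultimately show "card (active_nbhd V E (trdf s) v) + 3
      \<le> sum (trdf s) (insert v (active_nbhd V E (trdf s) v))"
    using trd_condition_from_subset[OF finite_V] by blast
qed

lemma card_strong_supports:
  "2 * card {u \<in> V. strong_support u} \<le> card {v \<in> V. strong_leaf v}"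
proof -
  let ?B = "{u \<in> V. strong_support u}"
  have "(\<Sum>u\<in>?B. 2) \<le> (\<Sum>u\<in>?B. card (leaf_nbrs u))"
    by (rule sum_mono) (simp add: strong_support_def)
  also have "\<dots> = card (\<Union>u\<in>?B. leaf_nbrs u)"
  proof (rule card_UN_disjoint[symmetric])
    show "finite ?B" using finite_V by simp
    show "\<forall>u\<in>?B. finite (leaf_nbrs u)" using finite_N by (simp add: leaf_nbrs_def)
    show "\<forall>u\<in>?B. \<forall>u'\<in>?B. u \<noteq> u' \<longrightarrow> leaf_nbrs u \<inter> leaf_nbrs u' = {}"
      using support_leaf_nbr by blast
  qed
  also have "\<dots> \<le> card {v \<in> V. strong_leaf v}"
    using finite_V N_subset support_leaf_nbr
    by (intro card_mono) (auto simp: leaf_nbrs_def strong_leaf_def)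
  finally show ?thesis by (simp add: mult.commute)
qed

lemma card_weak_leaves:
  "card {v \<in> V. leaf v \<and> \<not> strong_leaf v} \<le> card {u \<in> V. \<not> leaf u \<and> \<not> strong_support u}"
proof (rule card_inj_on_le[of support])
  show "inj_on support {v \<in> V. leaf v \<and> \<not> strong_leaf v}"
  proof (rule inj_onI)
    fix x y
    assume x: "x \<in> {v \<in> V. leaf v \<and> \<not> strong_leaf v}"
      and y: "y \<in> {v \<in> V. leaf v \<and> \<not> strong_leaf v}" and same: "support x = support y"
    show "x = y"
    proof (rule ccontr)
      assume "x \<noteq> y"
      have "{x, y} \<subseteq> leaf_nbrs (support x)"
        using x y same leaf_N N_sym by (auto simp: leaf_nbrs_def)
      then have "2 \<le> card (leaf_nbrs (support x))"
        using \<open>x \<noteq> y\<close> finite_N card_mono[of "leaf_nbrs (support x)" "{x, y}"]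
        by (simp add: leaf_nbrs_def)
      then show False using x by (simp add: strong_leaf_def strong_support_def)
    qed
  qed
  show "support ` {v \<in> V. leaf v \<and> \<not> strong_leaf v} \<subseteq> {u \<in> V. \<not> leaf u \<and> \<not> strong_support u}"
    using support_not_leaf support_in_N N_subset by (auto simp: strong_leaf_def)
  show "finite {u \<in> V. \<not> leaf u \<and> \<not> strong_support u}" using finite_V by simp
qed

lemma trdf_pair_sum:
  "trdf True v + trdf False v = 8 * of_bool (strong_support v)
     + 4 * of_bool (leaf v \<and> \<not> strong_leaf v) + 3 * of_bool (\<not> leaf v \<and> \<not> strong_support v)"
  using strong_support_not_leaf by (auto simp: trdf_def strong_leaf_def)

lemma vertex_classes:
  "of_bool (strong_leaf v) + of_bool (strong_support v)
     + of_bool (leaf v \<and> \<not> strong_leaf v) + of_bool (\<not> leaf v \<and> \<not> strong_support v) = (1::nat)"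
  using strong_support_not_leaf by (auto simp: strong_leaf_def)

theorem four_times_triple_roman_domination_number_le: "4 * triple_roman_domination_number V E \<le> 7 * card V"
proof -
  let ?A = "card {v \<in> V. strong_leaf v}" and ?B = "card {v \<in> V. strong_support v}"
    and ?C = "card {v \<in> V. leaf v \<and> \<not> strong_leaf v}"
    and ?D = "card {v \<in> V. \<not> leaf v \<and> \<not> strong_support v}"
  have "weight V (trdf True) + weight V (trdf False) = (\<Sum>v\<in>V. trdf True v + trdf False v)"
    by (simp add: weight_def sum.distrib)
  also have "\<dots> = 8 * ?B + 4 * ?C + 3 * ?D"
    using finite_V by (simp add: trdf_pair_sum sum.distrib Collect_conj_eq)
  moreover have "card V = ?A + ?B + ?C + ?D"
  proof -
    have "card V = (\<Sum>v\<in>V. of_bool (strong_leaf v) + of_bool (strong_support v)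
        + of_bool (leaf v \<and> \<not> strong_leaf v) + of_bool (\<not> leaf v \<and> \<not> strong_support v))"
      by (simp only: vertex_classes) simp
    then show ?thesis using finite_V by (simp add: sum.distrib Collect_conj_eq)
  qed
  moreover have le_weight: "triple_roman_domination_number V E \<le> weight V (trdf s)" for s
    using finite_V is_3RDF_trdf by (rule triple_roman_domination_number_le_weight)
  ultimately show ?thesis
    using card_strong_supports card_weak_leaves le_weight[of True] le_weight[of False]
    by linarith
qed

end

theorem corollary15:
  fixes V :: "'a set" and E :: "'a \<Rightarrow> 'a \<Rightarrow> bool"
  assumes "simple_graph V E" and "connected_graph V E" and "card V \<ge> 3"
  shows "real (triple_roman_domination_number V E) \<le> 7 * real (card V) / 4"
proof -
  obtain r where "r \<in> V" using assms(3) by fastforce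
  interpret connected_bipartite_spanning_subgraph V E "level_graph E r"
    "\<lambda>v. even (hop_dist E r v)"
    using assms simple_graph_level_graph connected_graph_level_graph[OF assms(1,2) \<open>r \<in> V\<close>]
    by unfold_locales (auto simp: level_graph_def)
  have "real (4 * triple_roman_domination_number V E) \<le> real (7 * card V)"
    using four_times_triple_roman_domination_number_le by (simp only: of_nat_le_iff)
  then show ?thesis by simp
qed

end
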